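(* Let $S$ be a vector space over a field $\Bbbk$ and let $\nu:S\setminus\{0\}\to C$ and $\nu':S\setminus\{0\}\to C'$ be well-ordered injective valuations. Put $C_\nu=\nu(S\setminus\{0\})$, $C_{\nu'}=\nu'(S\setminus\{0\})$ and define $$\mathbf K_{\nu',\nu}(a)=\min\{\nu'(x): x\in S\setminus\{0\},\ \nu(x)=a\}\quad (a\in C_\nu),$$ and symmetrically $\mathbf K_{\nu,\nu'}:C_{\nu'}\to C_\nu$. Then $\mathbf K_{\nu',\nu}:C_\nu\to C_{\nu'}$ and $\mathbf K_{\nu,\nu'}:C_{\nu'}\to C_\nu$ are well-defined and mutually inverse bijections. Moreover, there exists a basis $\mathbf B$ of $S$ adapted to both $\nu$ and $\nu'$ such that $\mathbf K_{\nu',\nu}(\nu(b))=\nu'(b)$ for all $b\in\mathbf B$.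
   Context: A valuation on a $\Bbbk$-vector space $S$ with values in a totally ordered set $(C,\le)$ is a map $\nu:S\setminus\{0\}\to C$ such that $\nu(cx)=\nu(x)$ for all $c\in\Bbbk^\times$, $x\ne0$, and $\nu(x+y)\le\max(\nu(x),\nu(y))$ whenever $x,y,x+y\neq 0$. It is well-ordered if its image $\nu(S\setminus\{0\})$ is a well-ordered subset of $C$. It is injective if there is a basis $\mathbf B$ of $S$ such that $\nu|_{\mathbf B}$ is injective; such a basis is called adapted to $\nu$ (then $\nu|_{\mathbf B}$ is a bijection onto $\nu(S\setminus\{0\})$ and $\nu(x)$ is the maximum of $\nu(b)$ over the $b$ occurring in the expansion of $x$). *)

theory Defs
  imports Main "HOL.Vector_Spaces"
begin

text \<open>A vector space: the whole type 'v with scalar multiplication scale over the field 'k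
  (locale vector_space from HOL.Vector_Spaces). Valuations are functions on 'v; only their
  values on nonzero vectors matter.\<close>

definition is_valuation :: "('k::field \<Rightarrow> 'v::ab_group_add \<Rightarrow> 'v) \<Rightarrow> ('v \<Rightarrow> 'c::linorder) \<Rightarrow> bool" where
  "is_valuation scale \<nu> \<longleftrightarrow>
     (\<forall>c x. c \<noteq> 0 \<and> x \<noteq> 0 \<longrightarrow> \<nu> (scale c x) = \<nu> x) \<and>
     (\<forall>x y. x \<noteq> 0 \<and> y \<noteq> 0 \<and> x + y \<noteq> 0 \<longrightarrow> \<nu> (x + y) \<le> max (\<nu> x) (\<nu> y))"

definition val_image :: "('v::zero \<Rightarrow> 'c) \<Rightarrow> 'c set" where
  "val_image \<nu> = \<nu> ` (UNIV - {0})"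

definition well_ordered_set :: "'c::linorder set \<Rightarrow> bool" where
  "well_ordered_set A \<longleftrightarrow> (\<forall>X. X \<subseteq> A \<and> X \<noteq> {} \<longrightarrow> (\<exists>m\<in>X. \<forall>a\<in>X. m \<le> a))"

definition well_ordered_valuation :: "('v::zero \<Rightarrow> 'c::linorder) \<Rightarrow> bool" where
  "well_ordered_valuation \<nu> \<longleftrightarrow> well_ordered_set (val_image \<nu>)"

definition is_basis :: "('k::field \<Rightarrow> 'v::ab_group_add \<Rightarrow> 'v) \<Rightarrow> 'v set \<Rightarrow> bool" where
  "is_basis scale B \<longleftrightarrow> \<not> module.dependent scale B \<and> module.span scale B = UNIV"

definition adapted_basis :: "('k::field \<Rightarrow> 'v::ab_group_add \<Rightarrow> 'v) \<Rightarrow> ('v \<Rightarrow> 'c) \<Rightarrow> 'v set \<Rightarrow> bool" where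
  "adapted_basis scale \<nu> B \<longleftrightarrow> is_basis scale B \<and> inj_on \<nu> B"

definition injective_valuation :: "('k::field \<Rightarrow> 'v::ab_group_add \<Rightarrow> 'v) \<Rightarrow> ('v \<Rightarrow> 'c) \<Rightarrow> bool" where
  "injective_valuation scale \<nu> \<longleftrightarrow> (\<exists>B. adapted_basis scale \<nu> B)"

definition is_min_of :: "'c::linorder \<Rightarrow> 'c set \<Rightarrow> bool" where
  "is_min_of m A \<longleftrightarrow> m \<in> A \<and> (\<forall>a\<in>A. m \<le> a)"

definition fibre_vals :: "('v::zero \<Rightarrow> 'd) \<Rightarrow> ('v \<Rightarrow> 'c) \<Rightarrow> 'c \<Rightarrow> 'd set" where
  "fibre_vals \<nu>' \<nu> a = {\<nu>' x | x. x \<noteq> 0 \<and> \<nu> x = a}"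

definition Kmap :: "('v::zero \<Rightarrow> 'd::linorder) \<Rightarrow> ('v \<Rightarrow> 'c) \<Rightarrow> 'c \<Rightarrow> 'd" where
  "Kmap \<nu>' \<nu> a = (THE m. is_min_of m (fibre_vals \<nu>' \<nu> a))"

end

theory Submission
  imports Defs
begin

text \<open>The vectors of valuation below \<open>a\<close>, together with 0, form a subspace \<open>S_<a\<close>, and with
  an adapted basis any two vectors of the same valuation \<open>a\<close> are proportional modulo \<open>S_<a\<close>.
  Given \<open>a\<close>, take \<open>x\<close> with \<open>\<nu> x = a\<close> and \<open>\<nu>' x\<close> minimal. No \<open>y\<close> with \<open>\<nu>' y = \<nu>' x\<close> can have
  \<open>\<nu> y < a\<close>: subtracting the right multiple of \<open>y\<close> from \<open>x\<close> would lower \<open>\<nu>'\<close> and keep \<open>\<nu> = a\<close>.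
  Hence the two maps \<open>K\<close> are mutually inverse. The chosen minimisers, one for each value of \<open>\<nu>\<close>,
  are independent because their \<open>\<nu>\<close>-values are distinct, and they span by well-founded descent
  on \<open>\<nu>\<close>.\<close>

definition val_below :: "('v::zero \<Rightarrow> 'c::linorder) \<Rightarrow> 'c \<Rightarrow> 'v set" where
  "val_below \<nu> a = {x. x = 0 \<or> \<nu> x < a}"

context vector_space begin

lemma valuation_scale: "is_valuation scale \<nu> \<Longrightarrow> c \<noteq> 0 \<Longrightarrow> x \<noteq> 0 \<Longrightarrow> \<nu> (scale c x) = \<nu> x"
  unfolding is_valuation_def by blast

lemma valuation_add_le:
  "is_valuation scale \<nu> \<Longrightarrow> x \<noteq> 0 \<Longrightarrow> y \<noteq> 0 \<Longrightarrow> x + y \<noteq> 0 \<Longrightarrow> \<nu> (x + y) \<le> max (\<nu> x) (\<nu> y)"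
  unfolding is_valuation_def by blast

lemma subspace_val_below:
  fixes \<nu> :: "'b \<Rightarrow> 'c::linorder"
  assumes v: "is_valuation scale \<nu>"
  shows "subspace (val_below \<nu> a)"
  unfolding subspace_def
proof (intro conjI ballI allI)
  show "0 \<in> val_below \<nu> a" by (simp add: val_below_def)
next
  fix x y
  assume "x \<in> val_below \<nu> a" "y \<in> val_below \<nu> a"
  then show "x + y \<in> val_below \<nu> a"
    using valuation_add_le[OF v, of x y] le_less_trans[of "\<nu> (x + y)" "max (\<nu> x) (\<nu> y)" a]
    by (cases "x = 0"; cases "y = 0") (auto simp: val_below_def)
next
  fix c x
  assume "x \<in> val_below \<nu> a"
  then show "scale c x \<in> val_below \<nu> a"
    using valuation_scale[OF v, of c x] by (cases "x = 0 \<or> c = 0") (auto simp: val_below_def)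
qed

lemma valuation_add_below:
  fixes \<nu> :: "'b \<Rightarrow> 'c::linorder"
  assumes v: "is_valuation scale \<nu>" and x: "x \<noteq> 0" and z: "z \<in> val_below \<nu> (\<nu> x)"
  shows "x + z \<noteq> 0" and "\<nu> (x + z) = \<nu> x"
proof -
  have W: "subspace (val_below \<nu> (\<nu> x))" by (rule subspace_val_below[OF v])
  have "x \<notin> val_below \<nu> (\<nu> x)" using x by (simp add: val_below_def)
  then have "x + z \<notin> val_below \<nu> (\<nu> x)"
    using subspace_diff[OF W _ z] by (metis add_diff_cancel_right')
  then show nz: "x + z \<noteq> 0" by (auto simp: val_below_def)
  from \<open>x + z \<notin> val_below \<nu> (\<nu> x)\<close> have ge: "\<nu> x \<le> \<nu> (x + z)"
    by (auto simp: val_below_def)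
  have "\<nu> (x + z) \<le> \<nu> x"
    using z valuation_add_le[OF v x _ nz] by (cases "z = 0") (auto simp: val_below_def)
  with ge show "\<nu> (x + z) = \<nu> x" by simp
qed

lemma valuation_sum_inj:
  fixes \<nu> :: "'b \<Rightarrow> 'c::linorder"
  assumes v: "is_valuation scale \<nu>" and T: "finite T" "T \<noteq> {}"
    and nz: "\<forall>t\<in>T. u t \<noteq> 0 \<and> t \<noteq> 0" and inj: "inj_on \<nu> T"
  shows "(\<Sum>t\<in>T. scale (u t) t) \<noteq> 0 \<and> \<nu> (\<Sum>t\<in>T. scale (u t) t) = Max (\<nu> ` T)"
  using T nz inj
proof (induction T rule: finite_ne_induct)
  case (singleton t)
  then show ?case using valuation_scale[OF v] by simp
next
  case (insert t F)
  let ?s = "\<Sum>s\<in>F. scale (u s) s"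
  have IH: "?s \<noteq> 0" "\<nu> ?s = Max (\<nu> ` F)"
    using insert.IH insert.prems by (auto intro: inj_on_subset)
  have tx: "scale (u t) t \<noteq> 0" "\<nu> (scale (u t) t) = \<nu> t"
    using insert.prems valuation_scale[OF v] by auto
  have "Max (\<nu> ` F) \<in> \<nu> ` F" using insert.hyps(1,2) by simp
  then obtain f where f: "f \<in> F" "\<nu> f = Max (\<nu> ` F)" by auto
  have "\<nu> t \<noteq> \<nu> f"
    using inj_onD[OF insert.prems(2), of t f] f(1) insert.hyps(3) by auto
  then have "\<nu> ?s < \<nu> t \<or> \<nu> t < \<nu> ?s" using IH f by auto
  then have "scale (u t) t + ?s \<noteq> 0 \<and> \<nu> (scale (u t) t + ?s) = max (\<nu> t) (\<nu> ?s)"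
  proof
    assume lt: "\<nu> ?s < \<nu> t"
    then have "?s \<in> val_below \<nu> (\<nu> (scale (u t) t))" using tx by (simp add: val_below_def)
    from valuation_add_below[OF v tx(1) this] show ?thesis using tx lt by simp
  next
    assume lt: "\<nu> t < \<nu> ?s"
    then have "scale (u t) t \<in> val_below \<nu> (\<nu> ?s)" using tx by (simp add: val_below_def)
    from valuation_add_below[OF v IH(1) this] show ?thesis
      using tx lt by (simp add: ac_simps)
  qed
  then show ?case using insert.hyps IH by simp
qed

lemma independent_if_inj_valuation:
  assumes v: "is_valuation scale \<nu>" and nzB: "0 \<notin> B" and inj: "inj_on \<nu> B"
  shows "\<not> dependent B"
proof
  assume "dependent B"
  then obtain t u where t: "finite t" "t \<subseteq> B" and s0: "(\<Sum>v\<in>t. scale (u v) v) = 0"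
    and ex: "\<exists>v\<in>t. u v \<noteq> 0"
    unfolding dependent_explicit by blast
  define T where "T = {v\<in>t. u v \<noteq> 0}"
  have "(\<Sum>v\<in>t. scale (u v) v) = (\<Sum>v\<in>T. scale (u v) v)"
    unfolding T_def by (rule sum.mono_neutral_right) (use t in auto)
  moreover have "finite T" "T \<noteq> {}" and nz: "\<forall>v\<in>T. u v \<noteq> 0 \<and> v \<noteq> 0"
    using t ex nzB by (auto simp: T_def)
  moreover have "inj_on \<nu> T" by (rule inj_on_subset[OF inj]) (use t in \<open>auto simp: T_def\<close>)
  ultimately show False using valuation_sum_inj[OF v _ _ nz] s0 by simp
qed

lemma adapted_basis_leading_term:
  assumes v: "is_valuation scale \<nu>" and B: "adapted_basis scale \<nu> B" and x: "x \<noteq> 0"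
  shows "\<exists>b\<in>B. \<exists>c. c \<noteq> 0 \<and> \<nu> b = \<nu> x \<and> x - scale c b \<in> val_below \<nu> (\<nu> x)"
proof -
  have inj: "inj_on \<nu> B" and "\<not> dependent B" and "span B = UNIV"
    using B unfolding adapted_basis_def is_basis_def by auto
  then have B0: "0 \<notin> B" using dependent_zero by blast
  obtain t r where t: "finite t" "t \<subseteq> B" and xs: "x = (\<Sum>a\<in>t. scale (r a) a)"
    using \<open>span B = UNIV\<close> unfolding span_explicit by blast
  define T where "T = {a\<in>t. r a \<noteq> 0}"
  have T: "finite T" "T \<subseteq> B" and nz: "\<forall>a\<in>T. r a \<noteq> 0 \<and> a \<noteq> 0"
    using t B0 by (auto simp: T_def)
  have injT: "inj_on \<nu> T" using inj T(2) by (rule inj_on_subset)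
  have xT: "x = (\<Sum>a\<in>T. scale (r a) a)"
    unfolding xs T_def by (rule sum.mono_neutral_right) (use t in auto)
  have "T \<noteq> {}" using x xT by auto
  with valuation_sum_inj[OF v T(1) _ nz injT] xT have vx: "\<nu> x = Max (\<nu> ` T)" by simp
  have "Max (\<nu> ` T) \<in> \<nu> ` T" using T(1) \<open>T \<noteq> {}\<close> by simp
  then obtain b where b: "b \<in> T" "\<nu> b = \<nu> x" using vx by auto
  have lower: "scale (r a) a \<in> val_below \<nu> (\<nu> x)" if a: "a \<in> T - {b}" for a
  proof -
    have "\<nu> a \<le> \<nu> x" using a T(1) vx by simp
    moreover have "\<nu> a \<noteq> \<nu> b" using a b(1) inj_onD[OF injT] by blast
    moreover have "\<nu> (scale (r a) a) = \<nu> a" using a nz valuation_scale[OF v] by blast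
    ultimately show ?thesis using b(2) by (simp add: val_below_def less_le)
  qed
  have "x - scale (r b) b = (\<Sum>a\<in>T - {b}. scale (r a) a)"
    using xT sum.remove[OF T(1) b(1), of "\<lambda>a. scale (r a) a"] by simp
  also have "\<dots> \<in> val_below \<nu> (\<nu> x)"
    by (rule subspace_sum[OF subspace_val_below[OF v] lower])
  finally have "x - scale (r b) b \<in> val_below \<nu> (\<nu> x)" .
  then show ?thesis using b T(2) nz by blast
qed

lemma adapted_basis_cancel_leading_term:
  assumes v: "is_valuation scale \<nu>" and B: "adapted_basis scale \<nu> B"
    and x: "x \<noteq> 0" and y: "y \<noteq> 0" and eq: "\<nu> x = \<nu> y"
  shows "\<exists>e. x - scale e y \<in> val_below \<nu> (\<nu> x)"
proof -
  obtain b c where b: "b \<in> B" "c \<noteq> 0" "\<nu> b = \<nu> x" "x - scale c b \<in> val_below \<nu> (\<nu> x)"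
    using adapted_basis_leading_term[OF v B x] by blast
  obtain b' d where b': "b' \<in> B" "d \<noteq> 0" "\<nu> b' = \<nu> y" "y - scale d b' \<in> val_below \<nu> (\<nu> x)"
    using adapted_basis_leading_term[OF v B y] eq by auto
  have "b' = b" using B b b' eq unfolding adapted_basis_def by (metis inj_on_def)
  then have "x - scale (c / d) y = (x - scale c b) - scale (c / d) (y - scale d b')"
    using b'(2) by (simp add: scale_right_diff_distrib)
  also have "\<dots> \<in> val_below \<nu> (\<nu> x)"
    using subspace_diff[OF _ b(4) subspace_scale[OF _ b'(4)]] subspace_val_below[OF v] by blast
  finally show ?thesis by blast
qed

lemma span_eq_UNIV_if_val_reps:
  assumes v: "is_valuation scale \<nu>" and wo: "well_ordered_valuation \<nu>"
    and iv: "injective_valuation scale \<nu>"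
    and nzB: "0 \<notin> B" and rep: "val_image \<nu> \<subseteq> \<nu> ` B"
  shows "span B = UNIV"
proof (rule ccontr)
  obtain B0 where B0: "adapted_basis scale \<nu> B0" using iv unfolding injective_valuation_def by blast
  define X where "X = \<nu> ` (UNIV - span B)"
  assume "span B \<noteq> UNIV"
  then have "X \<subseteq> val_image \<nu>" "X \<noteq> {}"
    using span_zero unfolding X_def val_image_def by auto
  then obtain m where "m \<in> X" and mmin: "\<forall>c\<in>X. m \<le> c"
    using wo unfolding well_ordered_valuation_def well_ordered_set_def by blast
  then obtain y where y: "y \<notin> span B" "\<nu> y = m" unfolding X_def by blast
  have ymin: "\<nu> y \<le> \<nu> z" if "z \<notin> span B" for z
    using mmin that y(2) unfolding X_def by blast
  have "y \<noteq> 0" using y(1) span_zero by blast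
  then have "\<nu> y \<in> \<nu> ` B" using rep unfolding val_image_def by blast
  then obtain b where b: "b \<in> B" "\<nu> b = \<nu> y" by auto
  have "b \<noteq> 0" using b(1) nzB by blast
  then obtain e where e: "y - scale e b \<in> val_below \<nu> (\<nu> y)"
    using adapted_basis_cancel_leading_term[OF v B0 \<open>y \<noteq> 0\<close>] b(2) by metis
  have "scale e b \<in> span B" using b(1) by (simp add: span_base span_scale)
  then have "y - scale e b \<notin> span B" using y(1) span_add by fastforce
  then have "y - scale e b \<noteq> 0" and "\<nu> y \<le> \<nu> (y - scale e b)" using span_zero ymin by auto
  then show False using e by (simp add: val_below_def)
qed

lemma is_basis_if_val_reps:
  assumes v: "is_valuation scale \<nu>" and wo: "well_ordered_valuation \<nu>"
    and iv: "injective_valuation scale \<nu>"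
    and nzB: "0 \<notin> B" and inj: "inj_on \<nu> B" and rep: "val_image \<nu> \<subseteq> \<nu> ` B"
  shows "is_basis scale B"
  unfolding is_basis_def
  using independent_if_inj_valuation[OF v nzB inj] span_eq_UNIV_if_val_reps[OF v wo iv nzB rep]
  by blast

end

lemma is_min_of_unique: "is_min_of m A \<Longrightarrow> is_min_of m' A \<Longrightarrow> m = m'"
  unfolding is_min_of_def by (meson antisym)

lemma Kmap_eqI: "is_min_of m (fibre_vals \<nu>' \<nu> a) \<Longrightarrow> Kmap \<nu>' \<nu> a = m"
  unfolding Kmap_def by (rule the_equality) (auto intro: is_min_of_unique)

lemma fibre_vals_has_min:
  assumes wo: "well_ordered_valuation \<nu>'" and a: "a \<in> val_image \<nu>"
  shows "\<exists>m. is_min_of m (fibre_vals \<nu>' \<nu> a)"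
proof -
  have "fibre_vals \<nu>' \<nu> a \<subseteq> val_image \<nu>'" "fibre_vals \<nu>' \<nu> a \<noteq> {}"
    using a unfolding fibre_vals_def val_image_def by auto
  then show ?thesis
    using wo unfolding well_ordered_valuation_def well_ordered_set_def is_min_of_def by blast
qed

lemma Kmap_is_min:
  assumes "well_ordered_valuation \<nu>'" and "a \<in> val_image \<nu>"
  shows "is_min_of (Kmap \<nu>' \<nu> a) (fibre_vals \<nu>' \<nu> a)"
  using fibre_vals_has_min[OF assms] Kmap_eqI by metis

lemma Kmap_attained:
  assumes "well_ordered_valuation \<nu>'" and "a \<in> val_image \<nu>"
  shows "\<exists>x. x \<noteq> 0 \<and> \<nu> x = a \<and> \<nu>' x = Kmap \<nu>' \<nu> a"
  using Kmap_is_min[OF assms] unfolding is_min_of_def fibre_vals_def by auto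

lemma Kmap_le:
  assumes "well_ordered_valuation \<nu>'" and "a \<in> val_image \<nu>" and "y \<noteq> 0" and "\<nu> y = a"
  shows "Kmap \<nu>' \<nu> a \<le> \<nu>' y"
  using Kmap_is_min[OF assms(1,2)] assms(3,4) unfolding is_min_of_def fibre_vals_def by auto

lemma Kmap_in_val_image:
  assumes "well_ordered_valuation \<nu>'" and "a \<in> val_image \<nu>"
  shows "Kmap \<nu>' \<nu> a \<in> val_image \<nu>'"
  using Kmap_attained[OF assms] unfolding val_image_def by force

context vector_space begin

lemma Kmap_Kmap:
  fixes \<nu> :: "'b \<Rightarrow> 'c::linorder" and \<nu>' :: "'b \<Rightarrow> 'd::linorder"
  assumes v: "is_valuation scale \<nu>" and v': "is_valuation scale \<nu>'"
    and wo': "well_ordered_valuation \<nu>'" and iv': "injective_valuation scale \<nu>'"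
    and a: "a \<in> val_image \<nu>"
  shows "Kmap \<nu> \<nu>' (Kmap \<nu>' \<nu> a) = a"
proof (rule Kmap_eqI)
  obtain B' where B': "adapted_basis scale \<nu>' B'" using iv' unfolding injective_valuation_def by blast
  define b where "b = Kmap \<nu>' \<nu> a"
  obtain x where x: "x \<noteq> 0" "\<nu> x = a" "\<nu>' x = b"
    using Kmap_attained[OF wo' a] unfolding b_def by blast
  have "\<not> c < a" if c: "c \<in> fibre_vals \<nu> \<nu>' b" for c
  proof
    assume "c < a"
    obtain y where y: "y \<noteq> 0" "\<nu>' y = b" "\<nu> y = c" using c unfolding fibre_vals_def by blast
    obtain e where e: "x - scale e y \<in> val_below \<nu>' b"
      using adapted_basis_cancel_leading_term[OF v' B' x(1) y(1)] x(3) y(2) by auto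
    have "y \<in> val_below \<nu> (\<nu> x)" using y(3) x(2) \<open>c < a\<close> by (simp add: val_below_def)
    then have "- scale e y \<in> val_below \<nu> (\<nu> x)"
      by (intro subspace_neg subspace_scale subspace_val_below[OF v])
    from valuation_add_below[OF v x(1) this] x(2)
    have "x - scale e y \<noteq> 0" "\<nu> (x - scale e y) = a" by simp_all
    then have "b \<le> \<nu>' (x - scale e y)" using Kmap_le[OF wo' a] unfolding b_def by blast
    then show False using e \<open>x - scale e y \<noteq> 0\<close> by (simp add: val_below_def)
  qed
  moreover have "a \<in> fibre_vals \<nu> \<nu>' b" unfolding fibre_vals_def using x by auto
  ultimately show "is_min_of a (fibre_vals \<nu> \<nu>' (Kmap \<nu>' \<nu> a))"
    unfolding is_min_of_def b_def by (meson not_le)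
qed

lemma common_adapted_basis:
  fixes \<nu> :: "'b \<Rightarrow> 'c::linorder" and \<nu>' :: "'b \<Rightarrow> 'd::linorder"
  assumes v: "is_valuation scale \<nu>" and wo: "well_ordered_valuation \<nu>"
    and iv: "injective_valuation scale \<nu>"
    and v': "is_valuation scale \<nu>'" and wo': "well_ordered_valuation \<nu>'"
    and iv': "injective_valuation scale \<nu>'"
  shows "\<exists>B. adapted_basis scale \<nu> B \<and> adapted_basis scale \<nu>' B
              \<and> (\<forall>b\<in>B. Kmap \<nu>' \<nu> (\<nu> b) = \<nu>' b)"
proof -
  let ?A = "val_image \<nu>"
  have "\<forall>a\<in>?A. \<exists>x. x \<noteq> 0 \<and> \<nu> x = a \<and> \<nu>' x = Kmap \<nu>' \<nu> a"
    by (intro ballI Kmap_attained[OF wo'])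
  then obtain r where r: "\<forall>a\<in>?A. r a \<noteq> 0 \<and> \<nu> (r a) = a \<and> \<nu>' (r a) = Kmap \<nu>' \<nu> a"
    by (elim bchoice[elim_format] exE)
  have inj: "inj_on \<nu> (r ` ?A)"
  proof (rule inj_on_imageI, rule inj_onI)
    fix a a' assume "a \<in> ?A" "a' \<in> ?A" "(\<nu> \<circ> r) a = (\<nu> \<circ> r) a'"
    then show "a = a'" using r by simp
  qed
  have inj': "inj_on \<nu>' (r ` ?A)"
  proof (rule inj_on_imageI, rule inj_onI)
    fix a a' assume a: "a \<in> ?A" "a' \<in> ?A" and "(\<nu>' \<circ> r) a = (\<nu>' \<circ> r) a'"
    then have "Kmap \<nu>' \<nu> a = Kmap \<nu>' \<nu> a'" using r by simp
    then show "a = a'" using Kmap_Kmap[OF v v' wo' iv'] a by metis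
  qed
  have "?A \<subseteq> \<nu> ` r ` ?A"
  proof
    fix a assume "a \<in> ?A"
    then have "a = \<nu> (r a)" using r by simp
    with \<open>a \<in> ?A\<close> show "a \<in> \<nu> ` r ` ?A" by blast
  qed
  moreover have "0 \<notin> r ` ?A" using r by (auto simp only: image_iff)
  ultimately have "is_basis scale (r ` ?A)"
    by (intro is_basis_if_val_reps[OF v wo iv _ inj])
  moreover have "\<forall>b\<in>r ` ?A. Kmap \<nu>' \<nu> (\<nu> b) = \<nu>' b" using r by simp
  ultimately show ?thesis
    using inj inj' unfolding adapted_basis_def by blast
qed

end

theorem mainTheorem1:
  fixes scale :: "'k::field \<Rightarrow> 'v::ab_group_add \<Rightarrow> 'v"
    and \<nu> :: "'v \<Rightarrow> 'c::linorder"
    and \<nu>' :: "'v \<Rightarrow> 'd::linorder"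
  assumes "vector_space scale"
    and "is_valuation scale \<nu>" and "well_ordered_valuation \<nu>" and "injective_valuation scale \<nu>"
    and "is_valuation scale \<nu>'" and "well_ordered_valuation \<nu>'" and "injective_valuation scale \<nu>'"
  shows "(\<forall>a\<in>val_image \<nu>. \<exists>m. is_min_of m (fibre_vals \<nu>' \<nu> a))
       \<and> (\<forall>a\<in>val_image \<nu>'. \<exists>m. is_min_of m (fibre_vals \<nu> \<nu>' a))
       \<and> bij_betw (Kmap \<nu>' \<nu>) (val_image \<nu>) (val_image \<nu>')
       \<and> bij_betw (Kmap \<nu> \<nu>') (val_image \<nu>') (val_image \<nu>)
       \<and> (\<forall>a\<in>val_image \<nu>. Kmap \<nu> \<nu>' (Kmap \<nu>' \<nu> a) = a)
       \<and> (\<forall>a\<in>val_image \<nu>'. Kmap \<nu>' \<nu> (Kmap \<nu> \<nu>' a) = a)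
       \<and> (\<exists>B. adapted_basis scale \<nu> B \<and> adapted_basis scale \<nu>' B
              \<and> (\<forall>b\<in>B. Kmap \<nu>' \<nu> (\<nu> b) = \<nu>' b))"
proof -
  have inv1: "\<forall>a\<in>val_image \<nu>. Kmap \<nu> \<nu>' (Kmap \<nu>' \<nu> a) = a"
    using vector_space.Kmap_Kmap[OF assms(1,2,5,6,7)] by blast
  have inv2: "\<forall>a\<in>val_image \<nu>'. Kmap \<nu>' \<nu> (Kmap \<nu> \<nu>' a) = a"
    using vector_space.Kmap_Kmap[OF assms(1,5,2,3,4)] by blast
  have maps: "Kmap \<nu>' \<nu> ` val_image \<nu> \<subseteq> val_image \<nu>'" "Kmap \<nu> \<nu>' ` val_image \<nu>' \<subseteq> val_image \<nu>"
    using Kmap_in_val_image[OF assms(6)] Kmap_in_val_image[OF assms(3)] by auto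
  show ?thesis
    using fibre_vals_has_min[OF assms(6)] fibre_vals_has_min[OF assms(3)]
      bij_betw_byWitness[OF inv1 inv2 maps] bij_betw_byWitness[OF inv2 inv1 maps(2,1)]
      inv1 inv2 vector_space.common_adapted_basis[OF assms(1-7)]
    by (intro conjI ballI) auto
qed

end
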